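(* For nonnegative integers $n$ and $s$ with $s\le n$, $$\sum_{k=0}^{n}\begin{bmatrix}n+k\\2k\end{bmatrix}\begin{bmatrix}2k\\k\end{bmatrix}\begin{bmatrix}2k\\k+s\end{bmatrix}\frac{(-1)^k q^{\binom{n-k}{2}}}{(-q;q)_k^2} =\begin{cases}(-1)^s q^{\frac{n^2-s^2}{2}}\begin{bmatrix}n\\ \frac{n-s}{2}\end{bmatrix}_{q^2}^2\dfrac{(q;q)_{n-s}(q;q)_{n+s}}{(q^2;q^2)_n^2}, & \text{if } n\equiv s\pmod 2,\\[2mm] 0, & \text{otherwise.}\end{cases}$$
   Context: For an indeterminate $q$ and an integer $n\ge 0$: $(a;q)_0=1$ and $(a;q)_n=(1-a)(1-aq)\cdots(1-aq^{n-1})$. The $q$-binomial coefficient is $\begin{bmatrix}n\\k\end{bmatrix}_q=\frac{(q^{n-k+1};q)_k}{(q;q)_k}$ if $0\le k\le n$ and $0$ otherwise; if no base is indicated, the base is $q$. *)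

theory Defs
  imports "HOL-Computational_Algebra.Formal_Power_Series"
begin

definition qpoch :: "'a::comm_ring_1 \<Rightarrow> 'a \<Rightarrow> nat \<Rightarrow> 'a" where
  "qpoch a q n = (\<Prod>i<n. 1 - a * q ^ i)"

definition qbin :: "'a::{comm_ring_1,divide} \<Rightarrow> nat \<Rightarrow> nat \<Rightarrow> 'a" where
  "qbin q n k = (if k \<le> n then qpoch (q ^ (n - k + 1)) q k div qpoch q q k else 0)"

end

theory Submission
  imports Defs "HOL-Computational_Algebra.Formal_Laurent_Series"
begin

(* The identity is proved by a Wilf-Zeilberger style argument, for an arbitrary element q of a
   field that is nonzero and not a root of unity; this is all that is needed for the
   q-factorials (q;q)_m and (q^2;q^2)_m to be invertible.

   Writing F(n,s) for the left-hand side and R(n,s) for the right-hand side, both satisfy the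
   first-order recurrence in the direction (n,s) -> (n-1,s+1)
       (1 - q^(n-s)) X(n,s) + q^(n+s) (1 - q^(n-s-1)) X(n-1,s+1) = 0      (s < n).
   For F this follows by telescoping: the combination of the two summands at index k equals
   G(k+1) - G(k) for an explicit certificate G(k) = rational factor * summand(k), which is
   checked using the two contiguous relations of the summand (in k, and in (n,s)).  For R it
   is a direct computation from a q-factorial form of R.  Since F(n,n) = R(n,n), and the
   recurrence determines X(n,s) from X(n-1,s+1) (its second coefficient vanishes when n = s+1),
   induction on n - s gives F = R.  Finally the formal power series identity of the theorem is
   transported into the field of formal Laurent series, where q = X satisfies the hypotheses
   above. *)

section \<open>q-Pochhammer symbols\<close>

lemma qpoch_0 [simp]: "qpoch a q 0 = 1"
  by (simp add: qpoch_def)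

lemma qpoch_Suc: "qpoch a q (Suc k) = qpoch a q k * (1 - a * q ^ k)"
  by (simp add: qpoch_def)

abbreviation qfac :: "'a::comm_ring_1 \<Rightarrow> nat \<Rightarrow> 'a" where
  "qfac q m \<equiv> qpoch q q m"

lemma qfac_Suc: "qfac q (Suc m) = qfac q m * (1 - q ^ Suc m)"
  by (simp add: qpoch_Suc)

lemma qfac_square_Suc: "qfac (q^2) (Suc m) = qfac (q^2) m * (1 - q ^ (2 * m + 2))"
  by (simp add: qpoch_Suc power_mult[symmetric] power_add[symmetric])

lemma qpoch_shift: "qpoch (q ^ (m + 1)) q k * qfac q m = qfac q (m + k)"
proof (induction k)
  case 0
  then show ?case by simp
next
  case (Suc k)
  have "qpoch (q ^ (m + 1)) q (Suc k) * qfac q m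
      = (qpoch (q ^ (m + 1)) q k * qfac q m) * (1 - q ^ (m + 1) * q ^ k)"
    by (simp add: qpoch_Suc algebra_simps)
  also have "\<dots> = qfac q (m + Suc k)"
    using Suc by (simp add: qpoch_Suc power_add ac_simps)
  finally show ?case .
qed

text \<open>(-q;q)_k (q;q)_k = (q^2;q^2)_k, which turns the denominator of the summand into
  q-factorials.\<close>
lemma qpoch_neg_times_qfac: "qpoch (- q) q k * qfac q k = qfac (q^2) k"
  by (induction k) (simp_all add: qpoch_Suc algebra_simps power2_eq_square power_mult_distrib)


section \<open>Generic q\<close>

text \<open>A nonzero field element that is not a root of unity; such q make all q-factorials
  invertible.  The indeterminate X of the Laurent series field is the instance we need.\<close>
locale generic_q =
  fixes q :: "'a::field"
  assumes q_nonzero: "q \<noteq> 0"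
    and q_power_ne_1: "0 < i \<Longrightarrow> q ^ i \<noteq> 1"
begin

lemma one_minus_power_nonzero: "0 < i \<Longrightarrow> 1 - q ^ i \<noteq> 0"
  using q_power_ne_1 by auto

lemma qfac_nonzero: "qfac q m \<noteq> 0"
  unfolding qpoch_def using one_minus_power_nonzero[of "Suc i" for i]
  by (auto simp: power_Suc)

lemma generic_q_square: "generic_q (q^2)"
  by unfold_locales (simp_all add: q_nonzero q_power_ne_1 flip: power_mult)

lemma qfac_square_nonzero: "qfac (q^2) m \<noteq> 0"
  using generic_q.qfac_nonzero[OF generic_q_square] .

lemma qbin_qfac:
  assumes "k \<le> N"
  shows "qbin q N k = qfac q N / (qfac q k * qfac q (N - k))"
proof -
  have "qpoch (q ^ (N - k + 1)) q k = qfac q N / qfac q (N - k)"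
    using qpoch_shift[of q "N - k" k] assms qfac_nonzero[of "N - k"] by (simp add: field_simps)
  then show ?thesis
    using assms by (simp add: qbin_def)
qed

end


section \<open>The two sides of the identity\<close>

definition summand :: "'a::field \<Rightarrow> nat \<Rightarrow> nat \<Rightarrow> nat \<Rightarrow> 'a" where
  "summand q n s k = qbin q (n + k) (2 * k) * qbin q (2 * k) k * qbin q (2 * k) (k + s)
            * ((-1) ^ k * q ^ ((n - k) choose 2)) / (qpoch (- q) q k) ^ 2"

definition lhs :: "'a::field \<Rightarrow> nat \<Rightarrow> nat \<Rightarrow> 'a" where
  "lhs q n s = (\<Sum>k = 0..n. summand q n s k)"

definition rhs :: "'a::field \<Rightarrow> nat \<Rightarrow> nat \<Rightarrow> 'a" where
  "rhs q n s = (if even (n - s)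
          then (-1) ^ s * q ^ ((n ^ 2 - s ^ 2) div 2) * (qbin (q ^ 2) n ((n - s) div 2)) ^ 2
               * (qpoch q q (n - s) * qpoch q q (n + s)) / (qpoch (q ^ 2) (q ^ 2) n) ^ 2
          else 0)"

lemma summand_below: "k < s \<Longrightarrow> summand q n s k = 0"
  by (simp add: summand_def qbin_def)

lemma summand_above: "n < k \<Longrightarrow> summand q n s k = 0"
  by (simp add: summand_def qbin_def)

lemma choose2_Suc: "Suc m choose 2 = (m choose 2) + m"
  by (metis Suc_1 add.commute binomial_Suc_Suc choose_one)

context generic_q
begin

lemma summand_qfac:
  assumes "s \<le> k" "k \<le> n"
  shows "summand q n s k = (-1)^k * q^((n-k) choose 2) * qfac q (n+k) * qfac q (2*k)
     / (qfac q (n-k) * (qfac (q^2) k)^2 * qfac q (k+s) * qfac q (k-s))"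
proof -
  have qbin_outer: "qbin q (n + k) (2 * k) = qfac q (n+k) / (qfac q (2*k) * qfac q (n-k))"
    using qbin_qfac[of "2*k" "n+k"] assms by simp
  have qbin_central: "qbin q (2 * k) k = qfac q (2*k) / (qfac q k * qfac q k)"
    using qbin_qfac[of k "2*k"] by simp
  have qbin_shifted: "qbin q (2 * k) (k+s) = qfac q (2*k) / (qfac q (k+s) * qfac q (k-s))"
    using qbin_qfac[of "k+s" "2*k"] assms by simp
  have neg: "qpoch (- q) q k = qfac (q^2) k / qfac q k"
    using qpoch_neg_times_qfac[of q k] qfac_nonzero[of k] by (simp add: field_simps)
  show ?thesis
    unfolding summand_def qbin_outer qbin_central qbin_shifted neg
    using qfac_nonzero qfac_square_nonzero by (simp add: field_simps power2_eq_square)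
qed

lemma summand_step_k:
  assumes "s \<le> k" "k < n"
  shows "summand q n s (Suc k) = - summand q n s k * (1-q^(n+k+1)) * (1-q^(2*k+1)) * (1-q^(n-k))
      / (q^(n-k-1) * (1-q^(2*k+2)) * (1-q^(k+s+1)) * (1-q^(k+1-s)))"
proof -
  obtain m where m: "n = k + 1 + m" using assms by (intro that[of "n - k - 1"]) simp
  obtain j where j: "k = s + j" using assms by (intro that[of "k - s"]) simp
  have next_term: "summand q n s (Suc k) = (-1)^Suc k * q^(m choose 2) * qfac q (n+k+1)
     * qfac q (2*k+2) / (qfac q m * (qfac (q^2) (Suc k))^2 * qfac q (k+s+1) * qfac q (j+1))"
    using summand_qfac[of s "Suc k" n] assms m j by simp
  have this_term: "summand q n s k = (-1)^k * q^(Suc m choose 2) * qfac q (n+k) * qfac q (2*k)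
     / (qfac q (Suc m) * (qfac (q^2) k)^2 * qfac q (k+s) * qfac q j)"
    using summand_qfac[of s k n] assms m j by simp
  have unroll: "qfac q (n+k+1) = qfac q (n+k) * (1 - q^(n+k+1))"
      "qfac q (2*k+2) = qfac q (2*k) * (1 - q^(2*k+1)) * (1 - q^(2*k+2))"
      "qfac q (Suc m) = qfac q m * (1 - q^(n-k))"
      "qfac q (k+s+1) = qfac q (k+s) * (1 - q^(k+s+1))"
      "qfac q (j+1) = qfac q j * (1 - q^(k+1-s))"
    and index: "n - k - 1 = m"
    using m j by (simp_all add: qfac_Suc)
  have "1 - q^(n-k) \<noteq> 0" "1 - q^(2*k+2) \<noteq> 0" "1 - q^(k+s+1) \<noteq> 0" "1 - q^(k+1-s) \<noteq> 0"
    by (intro one_minus_power_nonzero; use assms in simp)+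
  then show ?thesis
    unfolding next_term this_term unroll index qfac_square_Suc choose2_Suc
      power_add[of q "m choose 2" m]
    using qfac_nonzero qfac_square_nonzero q_nonzero
    by (simp add: divide_simps power2_eq_square ac_simps)
qed

lemma summand_step_ns:
  assumes "s \<le> k" "k < n"
  shows "summand q (n-1) (s+1) k = summand q n s k * (1-q^(n-k)) * (1-q^(k-s))
      / (q^(n-k-1) * (1-q^(n+k)) * (1-q^(k+s+1)))"
proof (cases "k = s")
  case True
  then show ?thesis by (simp add: summand_below)
next
  case False
  obtain m where m: "n = k + 1 + m" using assms by (intro that[of "n - k - 1"]) simp
  obtain j where j: "k = s + 1 + j" using assms False by (intro that[of "k - s - 1"]) simp
  have shifted_term: "summand q (n-1) (s+1) k = (-1)^k * q^(m choose 2) * qfac q (n-1+k)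
     * qfac q (2*k) / (qfac q m * (qfac (q^2) k)^2 * qfac q (k+s+1) * qfac q j)"
    using summand_qfac[of "s+1" k "n-1"] assms m j by simp
  have this_term: "summand q n s k = (-1)^k * q^(Suc m choose 2) * qfac q (n+k) * qfac q (2*k)
     / (qfac q (Suc m) * (qfac (q^2) k)^2 * qfac q (k+s) * qfac q (Suc j))"
    using summand_qfac[of s k n] assms m j by simp
  have unroll: "qfac q (n+k) = qfac q (n-1+k) * (1 - q^(n+k))"
      "qfac q (Suc m) = qfac q m * (1 - q^(n-k))"
      "qfac q (k+s+1) = qfac q (k+s) * (1 - q^(k+s+1))"
      "qfac q (Suc j) = qfac q j * (1 - q^(k-s))"
    and index: "n - k - 1 = m"
    using m j by (simp_all add: qfac_Suc)
  have "1 - q^(n-k) \<noteq> 0" "1 - q^(n+k) \<noteq> 0" "1 - q^(k+s+1) \<noteq> 0" "1 - q^(k-s) \<noteq> 0"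
    by (intro one_minus_power_nonzero; use assms False in simp)+
  then show ?thesis
    unfolding shifted_term this_term unroll index choose2_Suc power_add[of q "m choose 2" m]
    using qfac_nonzero qfac_square_nonzero q_nonzero
    by (simp add: divide_simps power2_eq_square ac_simps)
qed

end

text \<open>The Wilf-Zeilberger certificate: the combination of summands in the recurrence for the
  left-hand side telescopes to G(k+1) - G(k).\<close>
definition certificate :: "'a::field \<Rightarrow> nat \<Rightarrow> nat \<Rightarrow> nat \<Rightarrow> 'a" where
  "certificate q n s k = - (q^(n-k)) * (1-q^(2*k)) * (1-q^(k-s)) / (1-q^(n+k)) * summand q n s k"

context generic_q
begin

text \<open>The telescoping relation for s \<le> k < n.  With S = q^s, J = q^(k-s), M = q^(n-k-1) it is,
  after dividing by the k-th summand, a rational identity in q, S, J, M.\<close>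
lemma certificate_difference_interior:
  assumes "s \<le> k" "k < n"
  shows "(1-q^(n-s)) * summand q n s k + q^(n+s) * (1-q^(n-s-1)) * summand q (n-1) (s+1) k
       = certificate q n s (Suc k) - certificate q n s k"
proof -
  obtain m where m: "n = k + 1 + m" using assms by (intro that[of "n - k - 1"]) simp
  obtain j where j: "k = s + j" using assms by (intro that[of "k - s"]) simp
  define S J M where "S = q^s" and "J = q^j" and "M = q^m"
  have powers: "q^(n-s) = q*J*M" "q^(n+s) = q*S^2*J*M" "q^(n-s-1) = J*M" "q^(n - Suc k) = M"
    "q^(n-k) = q*M" "q^(2*k) = S^2*J^2" "q^(k-s) = J" "q^(n-k-1) = M"
    "q^(2*k+1) = q*S^2*J^2" "q^(n+k) = q*S^2*J^2*M" "q^(k+s+1) = q*S^2*J"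
    "q^(2 * Suc k) = q^2*S^2*J^2" "q^(2*k+2) = q^2*S^2*J^2" "q^(Suc k - s) = q*J"
    "q^(k+1-s) = q*J" "q^(n + Suc k) = q^2*S^2*J^2*M" "q^(n+k+1) = q^2*S^2*J^2*M"
    unfolding S_def J_def M_def m j
    by (simp_all add: power_add power2_eq_square algebra_simps power_mult)
  have "1 - q^(2*k+2) \<noteq> 0" "1 - q^(k+1-s) \<noteq> 0" "1 - q^(n+k+1) \<noteq> 0"
      "1 - q^(n+k) \<noteq> 0" "1 - q^(k+s+1) \<noteq> 0"
    by (intro one_minus_power_nonzero; use assms in simp)+
  moreover have "M \<noteq> 0" unfolding M_def using q_nonzero by simp
  ultimately have "M \<noteq> 0" "1 - q^2*S^2*J^2 \<noteq> 0" "1 - q*J \<noteq> 0" "1 - q^2*S^2*J^2*M \<noteq> 0"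
      "1 - q*S^2*J^2*M \<noteq> 0" "1 - q*S^2*J \<noteq> 0"
    unfolding powers by simp_all
  then show ?thesis
    unfolding certificate_def summand_step_k[OF assms] summand_step_ns[OF assms] powers
    by (simp add: divide_simps) algebra
qed

lemma certificate_difference:
  assumes "s < n" "k \<le> n"
  shows "(1-q^(n-s)) * summand q n s k + q^(n+s) * (1-q^(n-s-1)) * summand q (n-1) (s+1) k
       = certificate q n s (Suc k) - certificate q n s k"
proof -
  consider "k < s" | "s \<le> k" "k < n" | "k = n" using assms by linarith
  then show ?thesis
  proof cases
    case 1
    then show ?thesis by (simp add: certificate_def summand_below)
  next
    case 2
    then show ?thesis by (rule certificate_difference_interior)
  next
    case 3
    have "1 - q^(n+n) \<noteq> 0" by (intro one_minus_power_nonzero; use assms in simp)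
    then have "certificate q n s n = - (1-q^(n-s)) * summand q n s n"
      by (simp add: certificate_def field_simps mult_2_right)
    moreover have "summand q (n-1) (s+1) n = 0" "certificate q n s (Suc n) = 0"
      using assms by (simp_all add: certificate_def summand_above)
    ultimately show ?thesis
      using 3 by (simp add: algebra_simps)
  qed
qed

lemma lhs_recurrence:
  assumes "s < n"
  shows "(1-q^(n-s)) * lhs q n s + q^(n+s) * (1-q^(n-s-1)) * lhs q (n-1) (s+1) = 0"
proof -
  have shifted: "(\<Sum>k = 0..n-1. summand q (n-1) (s+1) k)
      = (\<Sum>k = 0..n. summand q (n-1) (s+1) k)"
    using assms by (cases n) (simp_all add: summand_above sum.atLeast0_atMost_Suc)
  have "(1-q^(n-s)) * lhs q n s + q^(n+s) * (1-q^(n-s-1)) * lhs q (n-1) (s+1)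
      = (\<Sum>k = 0..n. (1-q^(n-s)) * summand q n s k
                     + q^(n+s) * (1-q^(n-s-1)) * summand q (n-1) (s+1) k)"
    unfolding lhs_def shifted sum.distrib sum_distrib_left ..
  also have "\<dots> = (\<Sum>k = 0..n. certificate q n s (Suc k) - certificate q n s k)"
    using certificate_difference assms by simp
  also have "\<dots> = certificate q n s (Suc n) - certificate q n s 0"
    by (rule sum_Suc_diff) simp
  also have "\<dots> = 0"
    by (simp add: certificate_def summand_above)
  finally show ?thesis .
qed

lemma rhs_qfac:
  assumes "n = s + 2 * t"
  shows "rhs q n s = (-1)^s * q^(t*(n+s)) * qfac q (n-s) * qfac q (n+s)
                    / (qfac (q^2) t * qfac (q^2) (n-t))^2"
proof -
  have "n^2 - s^2 = 2 * (t*(n+s))"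
    unfolding assms by (simp add: power2_eq_square algebra_simps)
  then have exponent: "(n^2 - s^2) div 2 = t*(n+s)" by simp
  have "qbin (q^2) n t = qfac (q^2) n / (qfac (q^2) t * qfac (q^2) (n-t))"
    using generic_q.qbin_qfac[OF generic_q_square, of t n] assms by simp
  then show ?thesis
    using assms qfac_square_nonzero[of n]
    by (simp add: rhs_def exponent field_simps power2_eq_square)
qed

lemma rhs_recurrence:
  assumes "s < n"
  shows "(1-q^(n-s)) * rhs q n s + q^(n+s) * (1-q^(n-s-1)) * rhs q (n-1) (s+1) = 0"
proof (cases "n = s + 1")
  case True
  then show ?thesis by (simp add: rhs_def)
next
  case False
  show ?thesis
  proof (cases "even (n - s)")
    case False
    then have "odd (n - 1 - (s + 1))" using \<open>n \<noteq> s + 1\<close> assms by presburger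
    then show ?thesis using False by (simp add: rhs_def)
  next
    case True
    then obtain t where t: "n = s + 2 * t + 2"
    proof -
      obtain u where "n - s = 2 * u" using True by (rule evenE)
      then show ?thesis using \<open>n \<noteq> s + 1\<close> assms by (intro that[of "u - 1"]) auto
    qed
    have this_rhs: "rhs q n s = (-1)^s * q^((t+1)*(n+s)) * qfac q (n-s) * qfac q (n+s)
        / (qfac (q^2) (t+1) * qfac (q^2) (n-(t+1)))^2"
      by (rule rhs_qfac) (use t in simp)
    have shifted_rhs: "rhs q (n-1) (s+1) = (-1)^(s+1) * q^(t*(n-1+(s+1))) * qfac q (n-1-(s+1))
        * qfac q (n-1+(s+1)) / (qfac (q^2) t * qfac (q^2) (n-1-t))^2"
      by (rule rhs_qfac) (use t in simp)
    have indices: "n - s = 2*t+2" "n - s - 1 = 2*t+1" "n-1-(s+1) = 2*t" "n-1+(s+1) = n+s"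
        "n-(t+1) = n-1-t"
      using t by simp_all
    have power_step: "q^((t+1)*(n+s)) = q^(t*(n+s)) * q^(n+s)"
      by (simp add: power_add algebra_simps)
    have qfac_step: "qfac q (2*t+2) = qfac q (2*t) * (1 - q^(2*t+1)) * (1 - q^(2*t+2))"
      "qfac (q^2) (t+1) = qfac (q^2) t * (1 - q^(2*t+2))"
      using qfac_square_Suc[of q t] by (simp_all add: qfac_Suc)
    have "1 - q^(2*t+2) \<noteq> 0" by (rule one_minus_power_nonzero) simp
    then show ?thesis
      unfolding this_rhs shifted_rhs
      unfolding indices power_step qfac_step
      using qfac_square_nonzero[of t] qfac_square_nonzero[of "n-1-t"]
      by (simp add: divide_simps power2_eq_square)
  qed
qed

lemma lhs_eq_rhs: "s \<le> n \<Longrightarrow> lhs q n s = rhs q n s"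
proof (induction "n - s" arbitrary: n s rule: less_induct)
  case less
  show ?case
  proof (cases "s = n")
    case True
    have "lhs q n n = (\<Sum>k \<in> {n}. summand q n n k)"
      unfolding lhs_def by (rule sum.mono_neutral_right) (auto simp: summand_below)
    then show ?thesis
      using True summand_qfac[of n n n] rhs_qfac[of n n 0] qfac_nonzero[of "2*n"]
      by (simp add: mult_2 binomial_eq_0)
  next
    case False
    then have "s < n" using less.prems by simp
    text \<open>Either the coefficient vanishes (n = s + 1) or the induction hypothesis applies.\<close>
    have "q^(n+s) * (1-q^(n-s-1)) * lhs q (n-1) (s+1) = q^(n+s) * (1-q^(n-s-1)) * rhs q (n-1) (s+1)"
      using less.hyps[of "n-1" "s+1"] \<open>s < n\<close> by (cases "n = s + 1") auto
    then have "(1-q^(n-s)) * lhs q n s = (1-q^(n-s)) * rhs q n s"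
      using lhs_recurrence[OF \<open>s < n\<close>] rhs_recurrence[OF \<open>s < n\<close>]
      by (simp add: eq_neg_iff_add_eq_0[symmetric])
    moreover have "1 - q^(n-s) \<noteq> 0"
      using \<open>s < n\<close> by (intro one_minus_power_nonzero) simp
    ultimately show ?thesis by simp
  qed
qed

end


section \<open>Transfer to formal power series\<close>

text \<open>Formal power series do not form a field, so the identity is proved in the field of formal
  Laurent series, into which fps embed; all denominators have constant coefficient 1, so the
  embedding commutes with the divisions occurring in the theorem.\<close>
lemma fps_to_fls_qpoch: "fps_to_fls (qpoch a b k) = qpoch (fps_to_fls a) (fps_to_fls b) k"
  by (induction k) (simp_all add: qpoch_Suc fls_times_fps_to_fls fps_to_fls_power)

lemma qpoch_nth_0: "(a :: 'a::field fps) $ 0 = 0 \<Longrightarrow> qpoch a b k $ 0 = 1"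
  by (induction k) (simp_all add: qpoch_Suc)

lemma fps_to_fls_divide:
  "(y :: 'a::field fps) $ 0 \<noteq> 0 \<Longrightarrow> fps_to_fls (x / y) = fps_to_fls x / fps_to_fls y"
  using fls_divide_fps_to_fls[of y x] by (simp add: subdegree_eq_0_iff)

lemma fps_to_fls_qbin:
  "(b :: 'a::field fps) $ 0 = 0 \<Longrightarrow> fps_to_fls (qbin b N k) = qbin (fps_to_fls b) N k"
  by (simp add: qbin_def fps_to_fls_divide qpoch_nth_0 fps_to_fls_qpoch fps_to_fls_power
      fls_times_fps_to_fls)

lemma fps_to_fls_sum:
  "fps_to_fls (\<Sum>k = 0..(n::nat). f k :: 'a::field fps) = (\<Sum>k = 0..n. fps_to_fls (f k))"
  by (induction n) simp_all

lemma generic_q_fls_X: "generic_q (fls_X :: 'a::field fls)"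
proof
  fix i :: nat
  assume "0 < i"
  then have "fls_nth (fls_X ^ i :: 'a fls) 0 \<noteq> fls_nth (1 :: 'a fls) 0" by simp
  then show "(fls_X :: 'a fls) ^ i \<noteq> 1" by metis
qed simp

lemmas fps_to_fls_simps = fps_to_fls_divide qpoch_nth_0 fps_to_fls_qpoch fps_to_fls_qbin
  fps_to_fls_power fls_times_fps_to_fls power2_eq_square

theorem lemma3p2:
  fixes n s :: nat
  assumes "s \<le> n"
  defines "q \<equiv> (fps_X :: 'a::field_char_0 fps)"
  shows "(\<Sum>k = 0..n. qbin q (n + k) (2 * k) * qbin q (2 * k) k * qbin q (2 * k) (k + s)
            * ((-1) ^ k * q ^ ((n - k) choose 2)) / (qpoch (- q) q k) ^ 2)
       = (if even (n - s)
          then (-1) ^ s * q ^ ((n ^ 2 - s ^ 2) div 2) * (qbin (q ^ 2) n ((n - s) div 2)) ^ 2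
               * (qpoch q q (n - s) * qpoch q q (n + s)) / (qpoch (q ^ 2) (q ^ 2) n) ^ 2
          else 0)"
    (is "?lhs = ?rhs")
proof -
  have "fps_to_fls ?lhs = lhs fls_X n s"
    unfolding fps_to_fls_sum lhs_def summand_def q_def
    by (intro sum.cong refl) (simp add: fps_to_fls_simps)
  also have "\<dots> = rhs fls_X n s"
    using generic_q.lhs_eq_rhs[OF generic_q_fls_X assms(1)] .
  also have "\<dots> = fps_to_fls ?rhs"
    unfolding rhs_def q_def by (simp add: fps_to_fls_simps)
  finally show ?thesis by simp
qed

end
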